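(* Let $\mathcal G$ be a Lie superalgebra over a field of characteristic zero, with $\mathcal U_{1-}$, $\bullet$ and the extended bracket $[\cdot,\cdot]$ as described below. For any homogeneous $A,B,C\in\mathcal U_{1-}$, $$[A,B]\bullet C=[A,B\bullet C]+(-1)^{|B||C|}[A\bullet C,B].$$
   Context: Set $\mathcal U_1=\mathcal G$ with its $\mathbb Z_2$-grading. For $p\ge1$ define recursively $\mathcal U_{-p+1}=\mathrm{Hom}(\mathcal U_1,\mathcal U_{-p+2})$, $\mathbb Z_2$-graded by declaring $A$ even (resp. odd) if it preserves (resp. reverses) parity; $|u|$ is the parity of a homogeneous element. Elements of $\mathcal U_{1-p}$ are operators of order $p$ (elements of $\mathcal G$ have order $0$); $\mathcal U_{1-}=\bigoplus_{p\ge0}\mathcal U_{1-p}$. Define $\circ$: $A\circ y=A(y)$, $y\circ A=0$ for $A$ of order $\ge1$ and $y\in\mathcal U_1$; for $A,B$ of orders $\ge1$, recursively $(A\circ B)(x)=A\circ B(x)+(-1)^{|B||x|}A(x)\circ B$. Define $\bullet$: $A_p\bullet B_q=\frac{p!q!}{(p+q-1)!}A_p\circ B_q$ for orders $p,q\ge1$; $A_p\bullet x=pA_p(x)$, $x\bullet A_p=0$, $x\bullet y=0$ for $x,y\in\mathcal U_1$. The bracket of $\mathcal G$ is extended to $\mathcal U_{1-}$: on $\mathcal G$ it is the given bracket, and for operators $A,B$ of orders $p,q$ with $p+q\ge1$, $[A,B]$ is the operator of order $p+q$ (parity $|A|+|B|$) defined recursively by $[A,B]\bullet x=[A,B\bullet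 x]+(-1)^{|x||B|}[A\bullet x,B]$ for all $x\in\mathcal G$. *)

theory Defs
  imports Complex_Main
begin

text \<open>Parity is encoded by bool (False = even, True = odd); addition of parities is xor,
  i.e. (\<noteq>). The super vector space G is the type 'g, a vector space over the field 'k
  (scalar multiplication sc), with homogeneous components G0 (even) and G1 (odd).\<close>

definition gr :: "'g set \<Rightarrow> 'g set \<Rightarrow> bool \<Rightarrow> 'g set" where
  "gr G0 G1 i = (if i then G1 else G0)"

definition psign :: "bool \<Rightarrow> 'k::ring_1" where
  "psign b = (if b then -1 else 1)"

definition proj :: "'g set \<Rightarrow> 'g set \<Rightarrow> bool \<Rightarrow> 'g \<Rightarrow> 'g::ab_group_add" where
  "proj G0 G1 i x = (THE y. y \<in> gr G0 G1 i \<and> x - y \<in> gr G0 G1 (\<not> i))"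

definition lie_superalgebra ::
  "('k::field \<Rightarrow> 'g::ab_group_add \<Rightarrow> 'g) \<Rightarrow> 'g set \<Rightarrow> 'g set \<Rightarrow> ('g \<Rightarrow> 'g \<Rightarrow> 'g) \<Rightarrow> bool" where
  "lie_superalgebra sc G0 G1 lb \<longleftrightarrow>
     vector_space sc \<and>
     (\<forall>i. 0 \<in> gr G0 G1 i \<and> (\<forall>x\<in>gr G0 G1 i. \<forall>y\<in>gr G0 G1 i. x + y \<in> gr G0 G1 i) \<and>
          (\<forall>c. \<forall>x\<in>gr G0 G1 i. sc c x \<in> gr G0 G1 i)) \<and>
     G0 \<inter> G1 = {0} \<and> (\<forall>x. \<exists>y\<in>G0. \<exists>z\<in>G1. x = y + z) \<and>
     (\<forall>x y z. lb (x + y) z = lb x z + lb y z) \<and>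
     (\<forall>x y z. lb x (y + z) = lb x y + lb x z) \<and>
     (\<forall>c x y. lb (sc c x) y = sc c (lb x y)) \<and>
     (\<forall>c x y. lb x (sc c y) = sc c (lb x y)) \<and>
     (\<forall>i j x y. x \<in> gr G0 G1 i \<longrightarrow> y \<in> gr G0 G1 j \<longrightarrow> lb x y \<in> gr G0 G1 (i \<noteq> j)) \<and>
     (\<forall>i j x y. x \<in> gr G0 G1 i \<longrightarrow> y \<in> gr G0 G1 j \<longrightarrow>
        lb x y = - sc (psign (i \<and> j)) (lb y x)) \<and>
     (\<forall>i j k x y z. x \<in> gr G0 G1 i \<longrightarrow> y \<in> gr G0 G1 j \<longrightarrow> z \<in> gr G0 G1 k \<longrightarrow>
        lb x (lb y z) = lb (lb x y) z + sc (psign (i \<and> j)) (lb y (lb x z)))"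

text \<open>An operator of order p (an element of U_{1-p} = Hom(G, U_{2-p})) is represented by its
  fully uncurried form: a function on lists of length p, multilinear; A(x) corresponds to
  the function ys \<mapsto> f (x # ys). Order 0 operators are the elements f [] of G.
  Values on lists of other lengths are irrelevant.
  An element X of U_{1-} = \<Oplus>_p U_{1-p} is a family X :: nat \<Rightarrow> 'g list \<Rightarrow> 'g, where X p is
  its component of order p; only finitely many components are non-zero.\<close>

definition U_elem :: "('k::field \<Rightarrow> 'g::ab_group_add \<Rightarrow> 'g) \<Rightarrow> (nat \<Rightarrow> 'g list \<Rightarrow> 'g) \<Rightarrow> bool" where
  "U_elem sc X \<longleftrightarrow>
     finite {n. \<exists>xs. length xs = n \<and> X n xs \<noteq> 0} \<and>
     (\<forall>n xs k u v. length xs = n \<longrightarrow> k < n \<longrightarrow>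
        X n (xs[k := u + v]) = X n (xs[k := u]) + X n (xs[k := v])) \<and>
     (\<forall>n xs k c u. length xs = n \<longrightarrow> k < n \<longrightarrow>
        X n (xs[k := sc c u]) = sc c (X n (xs[k := u])))"

text \<open>Homogeneous of parity a: for homogeneous arguments of parities ps, the value has
  parity a + sum ps.  (Even operators preserve parity, odd ones reverse it.)\<close>
definition U_hom :: "('k::field \<Rightarrow> 'g::ab_group_add \<Rightarrow> 'g) \<Rightarrow> 'g set \<Rightarrow> 'g set \<Rightarrow> bool
    \<Rightarrow> (nat \<Rightarrow> 'g list \<Rightarrow> 'g) \<Rightarrow> bool" where
  "U_hom sc G0 G1 a X \<longleftrightarrow> U_elem sc X \<and>
     (\<forall>n xs ps. length xs = n \<longrightarrow> length ps = n \<longrightarrow> (\<forall>k<n. xs ! k \<in> gr G0 G1 (ps ! k)) \<longrightarrow>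
        X n xs \<in> gr G0 G1 (foldr (\<lambda>p acc. p \<noteq> acc) ps a))"

definition U_eq :: "(nat \<Rightarrow> 'g list \<Rightarrow> 'g) \<Rightarrow> (nat \<Rightarrow> 'g list \<Rightarrow> 'g) \<Rightarrow> bool" where
  "U_eq X Y \<longleftrightarrow> (\<forall>n xs. length xs = n \<longrightarrow> X n xs = Y n xs)"

text \<open>op_comp p q b f g xs: A \<circ> B evaluated at xs, where A has order p (function f) and
  B has order q and parity b (function g). For p \<ge> 1, q = 0: A \<circ> y = A(y);
  for p = 0: y \<circ> B = 0; for p, q \<ge> 1:
  (A\<circ>B)(x) = A\<circ>B(x) + (-1)^{|B||x|} A(x)\<circ>B, for homogeneous x, extended linearly
  (x = proj False x + proj True x).\<close>
fun op_comp :: "('k::field \<Rightarrow> 'g::ab_group_add \<Rightarrow> 'g) \<Rightarrow> 'g set \<Rightarrow> 'g set \<Rightarrow>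
    nat \<Rightarrow> nat \<Rightarrow> bool \<Rightarrow> ('g list \<Rightarrow> 'g) \<Rightarrow> ('g list \<Rightarrow> 'g) \<Rightarrow> 'g list \<Rightarrow> 'g" where
  "op_comp sc G0 G1 p q b f g [] =
     (if p = 0 then 0 else if q = 0 then f [g []] else 0)"
| "op_comp sc G0 G1 p q b f g (x # xs) =
     (if p = 0 then 0 else if q = 0 then f (g [] # x # xs) else
       (\<Sum>i\<in>{False, True}.
          op_comp sc G0 G1 p (q - 1) (b \<noteq> i) f (\<lambda>ys. g (proj G0 G1 i x # ys)) xs
        + sc (psign (b \<and> i)) (op_comp sc G0 G1 (p - 1) q b (\<lambda>ys. f (proj G0 G1 i x # ys)) g xs)))"

text \<open>The product \<bullet> on operators of fixed orders: A_p \<bullet> B_q = p!q!/(p+q-1)! A_p \<circ> B_q,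
  A_p \<bullet> x = p A_p(x), x \<bullet> A_p = 0, x \<bullet> y = 0. Result has order p+q-1.\<close>
definition op_bul :: "('k::field_char_0 \<Rightarrow> 'g::ab_group_add \<Rightarrow> 'g) \<Rightarrow> 'g set \<Rightarrow> 'g set \<Rightarrow>
    nat \<Rightarrow> nat \<Rightarrow> bool \<Rightarrow> ('g list \<Rightarrow> 'g) \<Rightarrow> ('g list \<Rightarrow> 'g) \<Rightarrow> 'g list \<Rightarrow> 'g" where
  "op_bul sc G0 G1 p q b f g xs =
     (if p = 0 then 0
      else if q = 0 then sc (of_nat p) (f (g [] # xs))
      else sc (of_nat (fact p * fact q) / of_nat (fact (p + q - 1))) (op_comp sc G0 G1 p q b f g xs))"

text \<open>op_br p q b f g xs: [A,B] evaluated at xs (A order p, B order q and parity b). For p+q \<ge> 1, [A,B] has order p+q and is determined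
  by [A,B] \<bullet> x = [A,B\<bullet>x] + (-1)^{|x||B|}[A\<bullet>x,B]; since [A,B]\<bullet>x = (p+q)[A,B](x) this gives
  [A,B](x) = 1/(p+q) ([A,B\<bullet>x] + (-1)^{|x||B|}[A\<bullet>x,B]) for homogeneous x
  (and B\<bullet>x = q B(x), A\<bullet>x = p A(x), which are 0 for q = 0 resp. p = 0).\<close>
fun op_br :: "('k::field_char_0 \<Rightarrow> 'g::ab_group_add \<Rightarrow> 'g) \<Rightarrow> 'g set \<Rightarrow> 'g set \<Rightarrow> ('g \<Rightarrow> 'g \<Rightarrow> 'g) \<Rightarrow>
    nat \<Rightarrow> nat \<Rightarrow> bool \<Rightarrow> ('g list \<Rightarrow> 'g) \<Rightarrow> ('g list \<Rightarrow> 'g) \<Rightarrow> 'g list \<Rightarrow> 'g" where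
  "op_br sc G0 G1 lb p q b f g [] = (if p = 0 \<and> q = 0 then lb (f []) (g []) else 0)"
| "op_br sc G0 G1 lb p q b f g (x # xs) =
     (if p + q = 0 then 0 else
       sc (1 / of_nat (p + q))
         (\<Sum>i\<in>{False, True}.
            (if q = 0 then 0 else
               op_br sc G0 G1 lb p (q - 1) (b \<noteq> i) f
                 (op_bul sc G0 G1 q 0 False g (\<lambda>_. proj G0 G1 i x)) xs)
          + sc (psign (i \<and> b))
              (if p = 0 then 0 else
                 op_br sc G0 G1 lb (p - 1) q b
                   (op_bul sc G0 G1 p 0 False f (\<lambda>_. proj G0 G1 i x)) g xs)))"

text \<open>Second argument Y homogeneous of parity b. Component of order n of X \<bullet> Y collects
  the pairs of orders (p, q) with p \<ge> 1, p + q - 1 = n (other pairs give 0).\<close>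
definition U_bul :: "('k::field_char_0 \<Rightarrow> 'g::ab_group_add \<Rightarrow> 'g) \<Rightarrow> 'g set \<Rightarrow> 'g set \<Rightarrow> bool \<Rightarrow>
    (nat \<Rightarrow> 'g list \<Rightarrow> 'g) \<Rightarrow> (nat \<Rightarrow> 'g list \<Rightarrow> 'g) \<Rightarrow> nat \<Rightarrow> 'g list \<Rightarrow> 'g" where
  "U_bul sc G0 G1 b X Y n xs =
     (\<Sum>p\<in>{1..n+1}. op_bul sc G0 G1 p (n + 1 - p) b (X p) (Y (n + 1 - p)) xs)"

definition U_br :: "('k::field_char_0 \<Rightarrow> 'g::ab_group_add \<Rightarrow> 'g) \<Rightarrow> 'g set \<Rightarrow> 'g set \<Rightarrow>
    ('g \<Rightarrow> 'g \<Rightarrow> 'g) \<Rightarrow> bool \<Rightarrow>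
    (nat \<Rightarrow> 'g list \<Rightarrow> 'g) \<Rightarrow> (nat \<Rightarrow> 'g list \<Rightarrow> 'g) \<Rightarrow> nat \<Rightarrow> 'g list \<Rightarrow> 'g" where
  "U_br sc G0 G1 lb b X Y n xs =
     (\<Sum>p\<in>{0..n}. op_br sc G0 G1 lb p (n - p) b (X p) (Y (n - p)) xs)"

end

theory Submission
  imports Defs
begin

text \<open>
  Both sides are sums, over the orders p, q, r of the components of A, B, C, of terms built from
  operators f, g, h of fixed orders, so it suffices to compare [f,g] \<bullet> h with
  [f, g \<bullet> h] \<plusminus> [f \<bullet> h, g] on argument lists, by induction on the length of the list.
  Splitting the first argument into homogeneous parts v, the recursion defining the bracket,
  [f,g] \<bullet> v = [f, g \<bullet> v] \<plusminus> [f \<bullet> v, g], together with the Leibniz rule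
  (f \<bullet> h) \<bullet> v = f \<bullet> (h \<bullet> v) \<plusminus> (f \<bullet> v) \<bullet> h that the factorial normalisation of \<bullet> is designed
  for, shows that both sides, multiplied by p + q + r - 1, obey the same recursion: each is a signed
  sum of its own instances at (f, g, h \<bullet> v), (f, g \<bullet> v, h) and (f \<bullet> v, g, h), with the same
  Koszul signs.
\<close>

section \<open>Graded spaces with a bilinear bracket\<close>

locale graded_bilinear = vector_space sc
  for sc :: "'k::field_char_0 \<Rightarrow> 'g::ab_group_add \<Rightarrow> 'g" +
  fixes G0 G1 :: "'g set"
    and lb :: "'g \<Rightarrow> 'g \<Rightarrow> 'g"
  assumes gr_zero [simp]: "0 \<in> gr G0 G1 i"
    and gr_add: "x \<in> gr G0 G1 i \<Longrightarrow> y \<in> gr G0 G1 i \<Longrightarrow> x + y \<in> gr G0 G1 i"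
    and gr_scale: "x \<in> gr G0 G1 i \<Longrightarrow> sc c x \<in> gr G0 G1 i"
    and even_inter_odd: "G0 \<inter> G1 = {0}"
    and even_plus_odd: "\<exists>y\<in>G0. \<exists>z\<in>G1. x = y + z"
    and lb_add_left: "lb (x + y) z = lb x z + lb y z"
    and lb_add_right: "lb x (y + z) = lb x y + lb x z"
    and lb_scale_left: "lb (sc c x) y = sc c (lb x y)"
    and lb_scale_right: "lb x (sc c y) = sc c (lb x y)"

lemma lie_superalgebra_graded_bilinear:
  "lie_superalgebra sc G0 G1 lb \<Longrightarrow> graded_bilinear sc G0 G1 lb"
  unfolding lie_superalgebra_def graded_bilinear_def graded_bilinear_axioms_def by meson

context graded_bilinear
begin

abbreviation "Gr \<equiv> gr G0 G1"
abbreviation "pr \<equiv> proj G0 G1"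
abbreviation "cmp \<equiv> op_comp sc G0 G1"
abbreviation "bul \<equiv> op_bul sc G0 G1"
abbreviation "br \<equiv> op_br sc G0 G1 lb"

lemma lb_zero_left [simp]: "lb 0 y = 0"
  using lb_scale_left[of 0 0 y] by simp

lemma lb_zero_right [simp]: "lb x 0 = 0"
  using lb_scale_right[of x 0 0] by simp

lemma gr_diff: "x \<in> Gr i \<Longrightarrow> y \<in> Gr i \<Longrightarrow> x - y \<in> Gr i"
  using gr_add[of x i "sc (-1) y"] gr_scale[of y i "-1"] by simp

lemma gr_both_parities: "x \<in> Gr i \<Longrightarrow> x \<in> Gr (\<not> i) \<Longrightarrow> x = 0"
  using even_inter_odd unfolding gr_def by (cases i) auto

lemma gr_complement: "\<exists>y. y \<in> Gr i \<and> x - y \<in> Gr (\<not> i)"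
proof -
  obtain y z where "y \<in> G0" "z \<in> G1" "x = y + z"
    using even_plus_odd by blast
  then show ?thesis
    unfolding gr_def by (cases i) (auto intro: exI[of _ y] exI[of _ z])
qed

lemma proj_unique:
  assumes "y \<in> Gr i" "x - y \<in> Gr (\<not> i)" "y' \<in> Gr i" "x - y' \<in> Gr (\<not> i)"
  shows "y = y'"
proof -
  have "y - y' \<in> Gr i"
    using assms gr_diff by blast
  moreover have "y - y' \<in> Gr (\<not> i)"
    using gr_diff[OF assms(4,2)] by simp
  ultimately show ?thesis
    using gr_both_parities by fastforce
qed

lemma proj_eq: "y \<in> Gr i \<Longrightarrow> x - y \<in> Gr (\<not> i) \<Longrightarrow> pr i x = y"
  unfolding proj_def using proj_unique by blast

lemma proj_in: "pr i x \<in> Gr i"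
proof -
  obtain y where "y \<in> Gr i" "x - y \<in> Gr (\<not> i)"
    using gr_complement by blast
  then show ?thesis
    using proj_eq by simp
qed

lemma proj_self: "y \<in> Gr i \<Longrightarrow> pr i y = y"
  by (rule proj_eq) auto

lemma proj_other: "y \<in> Gr i \<Longrightarrow> pr (\<not> i) y = 0"
  by (rule proj_eq) auto

lemma proj_homogeneous: "y \<in> Gr i \<Longrightarrow> pr j y = (if j = i then y else 0)"
  using proj_self proj_other by (cases "j = i") auto

lemma proj_zero [simp]: "pr i 0 = 0"
  by (rule proj_self) simp

lemma proj_scale: "pr i (sc c x) = sc c (pr i x)"
proof -
  obtain y where y: "y \<in> Gr i" "x - y \<in> Gr (\<not> i)"
    using gr_complement by blast
  then have "sc c x - sc c y \<in> Gr (\<not> i)"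
    using gr_scale[of "x - y" "\<not> i" c] by (simp add: scale_right_diff_distrib)
  then show ?thesis
    using proj_eq[OF y] proj_eq[OF gr_scale[OF y(1)]] by simp
qed

section \<open>The extended bracket on operators of fixed order\<close>

definition bul_arg :: "nat \<Rightarrow> ('g list \<Rightarrow> 'g) \<Rightarrow> 'g \<Rightarrow> 'g list \<Rightarrow> 'g" where
  "bul_arg k F x ys = sc (of_nat k) (F (x # ys))"

definition multiscalar :: "nat \<Rightarrow> ('g list \<Rightarrow> 'g) \<Rightarrow> bool" where
  "multiscalar k F \<longleftrightarrow> (\<forall>ys zs a u. length ys + length zs + 1 = k \<longrightarrow>
     F (ys @ sc a u # zs) = sc a (F (ys @ u # zs)))"

definition vanishes_first :: "nat \<Rightarrow> ('g list \<Rightarrow> 'g) \<Rightarrow> bool" where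
  "vanishes_first k F \<longleftrightarrow> (\<forall>zs. length zs + 1 = k \<longrightarrow> F (0 # zs) = 0)"

definition has_parity :: "nat \<Rightarrow> bool \<Rightarrow> ('g list \<Rightarrow> 'g) \<Rightarrow> bool" where
  "has_parity k c F \<longleftrightarrow> (\<forall>ys ps. length ys = k \<longrightarrow> length ps = k \<longrightarrow>
     (\<forall>j<k. ys ! j \<in> Gr (ps ! j)) \<longrightarrow> F ys \<in> Gr (foldr (\<lambda>p acc. p \<noteq> acc) ps c))"

lemma bul_order0_right: "bul k 0 b F H = bul_arg k F (H [])"
  by (simp add: op_bul_def bul_arg_def fun_eq_iff)

lemma bul_arg_order0 [simp]: "bul_arg 0 F x = (\<lambda>_. 0)"
  by (simp add: bul_arg_def fun_eq_iff)

lemma bul_arg_add: "bul_arg k (\<lambda>ys. F ys + H ys) x = (\<lambda>ys. bul_arg k F x ys + bul_arg k H x ys)"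
  by (simp add: bul_arg_def fun_eq_iff scale_right_distrib)

lemma bul_arg_scale: "bul_arg k (\<lambda>ys. sc a (F ys)) x = (\<lambda>ys. sc a (bul_arg k F x ys))"
  by (simp add: bul_arg_def fun_eq_iff mult.commute)

lemma multiscalar_Cons: "multiscalar k F \<Longrightarrow> multiscalar (k - 1) (\<lambda>ys. F (x # ys))"
  unfolding multiscalar_def
proof (intro allI impI)
  fix ys zs :: "'g list" and a u
  assume F: "\<forall>ys zs a u. length ys + length zs + 1 = k \<longrightarrow> F (ys @ sc a u # zs) = sc a (F (ys @ u # zs))"
    and "length ys + length zs + 1 = k - 1"
  then have "length (x # ys) + length zs + 1 = k"
    by simp
  then show "F (x # ys @ sc a u # zs) = sc a (F (x # ys @ u # zs))"
    using F by (metis append_Cons)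
qed

lemma multiscalar_bul_arg: "multiscalar k F \<Longrightarrow> multiscalar (k - 1) (bul_arg k F x)"
  using multiscalar_Cons[of k F x] unfolding multiscalar_def bul_arg_def
  by (simp add: scale_left_commute)

lemma multiscalar_first:
  "multiscalar k F \<Longrightarrow> length zs + 1 = k \<Longrightarrow> F (sc a u # zs) = sc a (F (u # zs))"
  unfolding multiscalar_def by (metis append_Nil list.size(3) add_0)

lemma multiscalar_zero_first: "multiscalar k F \<Longrightarrow> length zs + 1 = k \<Longrightarrow> F (0 # zs) = 0"
  using multiscalar_first[of k F zs 0 0] by simp

lemma multiscalar_vanishes_first: "multiscalar k F \<Longrightarrow> vanishes_first k F"
  unfolding vanishes_first_def using multiscalar_zero_first by blast

lemma bul_arg_scale_arg:
  "multiscalar k F \<Longrightarrow> length ys = k - 1 \<Longrightarrow> bul_arg k F (sc a u) ys = sc a (bul_arg k F u ys)"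
  by (cases "k = 0") (simp_all add: bul_arg_def multiscalar_first scale_left_commute)

lemma has_parity_Nil: "has_parity 0 c F \<Longrightarrow> F [] \<in> Gr c"
  unfolding has_parity_def by fastforce

lemma has_parity_bul_arg:
  assumes F: "has_parity k c F" and v: "v \<in> Gr i" and k: "k \<noteq> 0"
  shows "has_parity (k - 1) (c \<noteq> i) (bul_arg k F v)"
  unfolding has_parity_def
proof (intro allI impI)
  fix ys :: "'g list" and ps :: "bool list"
  assume ys: "length ys = k - 1" and ps: "length ps = k - 1" and "\<forall>j<k - 1. ys ! j \<in> Gr (ps ! j)"
  then have "\<forall>j<k. (v # ys) ! j \<in> Gr ((i # ps) ! j)"
    using v by (auto simp: nth_Cons split: nat.split)
  then have "F (v # ys) \<in> Gr (foldr (\<lambda>p acc. p \<noteq> acc) (i # ps) c)"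
    using F ys ps k unfolding has_parity_def by (metis Suc_pred' length_Cons not_gr0)
  moreover have "foldr (\<lambda>p acc. p \<noteq> acc) ps (c \<noteq> i) = (i \<noteq> foldr (\<lambda>p acc. p \<noteq> acc) ps c)"
    by (induction ps) auto
  ultimately show "bul_arg k F v ys \<in> Gr (foldr (\<lambda>p acc. p \<noteq> acc) ps (c \<noteq> i))"
    unfolding bul_arg_def by (simp add: gr_scale)
qed

lemma br_Cons_if: "br p q b f g (x # xs) = (if p + q = 0 then 0 else
   sc (1 / of_nat (p + q))
     (\<Sum>i\<in>{False, True}.
        (if q = 0 then 0 else br p (q - 1) (b \<noteq> i) f (bul_arg q g (pr i x)) xs)
      + sc (psign (i \<and> b)) (if p = 0 then 0 else br (p - 1) q b (bul_arg p f (pr i x)) g xs)))"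
  by (simp only: op_br.simps bul_order0_right)

declare op_br.simps(2) [simp del]

lemma br_zero_right: "(\<And>ys. length ys = q \<Longrightarrow> g ys = 0) \<Longrightarrow> br p q b f g xs = 0"
proof (induction xs arbitrary: p q b f g)
  case (Cons x xs)
  have "br p (q - 1) b' f (bul_arg q g v) xs = 0" if "q \<noteq> 0" for b' v
    using that by (intro Cons.IH) (simp add: bul_arg_def Cons.prems)
  moreover have "br (p - 1) q b (bul_arg p f v) g xs = 0" for v
    by (intro Cons.IH) (simp add: Cons.prems)
  ultimately show ?case
    by (simp add: br_Cons_if)
qed simp

lemma br_zero_left: "(\<And>ys. length ys = p \<Longrightarrow> f ys = 0) \<Longrightarrow> br p q b f g xs = 0"
proof (induction xs arbitrary: p q b f g)
  case (Cons x xs)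
  have "br p (q - 1) b' f (bul_arg q g v) xs = 0" for b' v
    by (intro Cons.IH) (simp add: Cons.prems)
  moreover have "br (p - 1) q b (bul_arg p f v) g xs = 0" if "p \<noteq> 0" for v
    using that by (intro Cons.IH) (simp add: bul_arg_def Cons.prems)
  ultimately show ?case
    by (simp add: br_Cons_if)
qed simp

lemma br_Cons: "br p q b f g (x # xs) = (if p + q = 0 then 0 else
   sc (1 / of_nat (p + q))
     (\<Sum>i\<in>{False, True}. br p (q - 1) (b \<noteq> i) f (bul_arg q g (pr i x)) xs
        + sc (psign (i \<and> b)) (br (p - 1) q b (bul_arg p f (pr i x)) g xs)))"
  by (simp add: br_Cons_if br_zero_left br_zero_right)

lemma br_zero_fun_left [simp]: "br p q b (\<lambda>_. 0) g = (\<lambda>_. 0)"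
  by (simp add: br_zero_left fun_eq_iff)

lemma br_zero_fun_right [simp]: "br p q b f (\<lambda>_. 0) = (\<lambda>_. 0)"
  by (simp add: br_zero_right fun_eq_iff)

lemma br_cong:
  assumes "\<And>ys. length ys = p \<Longrightarrow> f ys = f' ys" "\<And>ys. length ys = q \<Longrightarrow> g ys = g' ys"
  shows "br p q b f g xs = br p q b f' g' xs"
  using assms
proof (induction xs arbitrary: p q b f f' g g')
  case (Cons x xs)
  have "br p (q - 1) b' f (bul_arg q g v) xs = br p (q - 1) b' f' (bul_arg q g' v) xs"
    if "q \<noteq> 0" for b' v
    using that by (intro Cons.IH) (simp_all add: bul_arg_def Cons.prems)
  moreover have "br (p - 1) q b (bul_arg p f v) g xs = br (p - 1) q b (bul_arg p f' v) g' xs"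
    if "p \<noteq> 0" for v
    using that by (intro Cons.IH) (simp_all add: bul_arg_def Cons.prems)
  ultimately show ?case
    by (simp add: br_Cons_if)
qed simp

lemma br_add_left: "br p q b (\<lambda>ys. f ys + f' ys) g xs = br p q b f g xs + br p q b f' g xs"
  by (induction xs arbitrary: p q b f f' g)
    (simp_all add: br_Cons_if bul_arg_add lb_add_left scale_right_distrib algebra_simps)

lemma br_add_right: "br p q b f (\<lambda>ys. g ys + g' ys) xs = br p q b f g xs + br p q b f g' xs"
  by (induction xs arbitrary: p q b f g g')
    (simp_all add: br_Cons_if bul_arg_add lb_add_right scale_right_distrib algebra_simps)

lemma br_scale_left: "br p q b (\<lambda>ys. sc a (f ys)) g xs = sc a (br p q b f g xs)"
  by (induction xs arbitrary: p q b f g)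
    (simp_all add: br_Cons_if bul_arg_scale lb_scale_left scale_right_distrib mult_ac)

lemma br_scale_right: "br p q b f (\<lambda>ys. sc a (g ys)) xs = sc a (br p q b f g xs)"
  by (induction xs arbitrary: p q b f g)
    (simp_all add: br_Cons_if bul_arg_scale lb_scale_right scale_right_distrib mult_ac)

lemma br_sum_left: "br p q b (\<lambda>ys. \<Sum>k\<in>K. f k ys) g xs = (\<Sum>k\<in>K. br p q b (f k) g xs)"
  by (induction K rule: infinite_finite_induct) (simp_all add: br_zero_left br_add_left)

lemma br_sum_right: "br p q b f (\<lambda>ys. \<Sum>k\<in>K. g k ys) xs = (\<Sum>k\<in>K. br p q b f (g k) xs)"
  by (induction K rule: infinite_finite_induct) (simp_all add: br_zero_right br_add_right)

lemma br_Cons_homogeneous: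
  assumes v: "v \<in> Gr i" and f: "vanishes_first p f" and g: "vanishes_first q g"
  shows "sc (of_nat (p + q)) (br p q b f g (v # xs))
    = br p (q - 1) (b \<noteq> i) f (bul_arg q g v) xs + sc (psign (i \<and> b)) (br (p - 1) q b (bul_arg p f v) g xs)"
proof -
  have "br p (q - 1) b' f (bul_arg q g 0) xs = 0" for b'
    using g by (intro br_zero_right) (cases "q = 0", simp_all add: bul_arg_def vanishes_first_def)
  moreover have "br (p - 1) q b (bul_arg p f 0) g xs = 0"
    using f by (intro br_zero_left) (cases "p = 0", simp_all add: bul_arg_def vanishes_first_def)
  ultimately show ?thesis
    using v by (cases i) (auto simp: br_Cons proj_homogeneous br_zero_left br_zero_right simp del: of_nat_add)
qed

lemma br_Cons_decompose:
  assumes f: "vanishes_first p f" and g: "vanishes_first q g"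
  shows "br p q b f g (x # xs) = (\<Sum>k\<in>{False, True}. br p q b f g (pr k x # xs))"
proof (cases "p + q = 0")
  case False
  have "br p q b f g (x # xs)
      = sc (1 / of_nat (p + q)) (\<Sum>k\<in>{False, True}. sc (of_nat (p + q)) (br p q b f g (pr k x # xs)))"
    by (subst br_Cons) (simp only: br_Cons_homogeneous[OF proj_in f g] if_not_P[OF False])
  then show ?thesis
    using False by (auto simp: scale_right_distrib simp del: of_nat_add)
qed (simp add: br_Cons)

lemma multiscalar_br:
  assumes "multiscalar p f" "multiscalar q g"
  shows "multiscalar (p + q) (br p q b f g)"
  unfolding multiscalar_def
proof (intro allI impI)
  fix ys zs :: "'g list" and a u
  assume "length ys + length zs + 1 = p + q"
  with assms show "br p q b f g (ys @ sc a u # zs) = sc a (br p q b f g (ys @ u # zs))"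
  proof (induction ys arbitrary: p q b f g)
    case Nil
    have "br p (q - 1) b' f (bul_arg q g (pr i (sc a u))) zs
        = sc a (br p (q - 1) b' f (bul_arg q g (pr i u)) zs)" for b' i
      unfolding proj_scale br_scale_right[symmetric]
      by (rule br_cong) (use Nil.prems in \<open>simp_all add: bul_arg_scale_arg\<close>)
    moreover have "br (p - 1) q b (bul_arg p f (pr i (sc a u))) g zs
        = sc a (br (p - 1) q b (bul_arg p f (pr i u)) g zs)" for i
      unfolding proj_scale br_scale_left[symmetric]
      by (rule br_cong) (use Nil.prems in \<open>simp_all add: bul_arg_scale_arg\<close>)
    ultimately show ?case
      by (simp add: br_Cons_if scale_sum_right scale_right_distrib mult_ac)
  next
    case (Cons y ys)
    have "br p (q - 1) b' f (bul_arg q g v) (ys @ sc a u # zs)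
        = sc a (br p (q - 1) b' f (bul_arg q g v) (ys @ u # zs))" if "q \<noteq> 0" for b' v
      using that Cons.prems by (intro Cons.IH multiscalar_bul_arg) auto
    moreover have "br (p - 1) q b (bul_arg p f v) g (ys @ sc a u # zs)
        = sc a (br (p - 1) q b (bul_arg p f v) g (ys @ u # zs))" if "p \<noteq> 0" for v
      using that Cons.prems by (intro Cons.IH multiscalar_bul_arg) auto
    ultimately show ?case
      by (simp add: br_Cons_if scale_sum_right scale_right_distrib mult_ac)
  qed
qed

section \<open>The products \<circ> and \<bullet>\<close>

lemma cmp_add_left: "cmp p q b (\<lambda>ys. f ys + f' ys) g xs = cmp p q b f g xs + cmp p q b f' g xs"
  by (induction xs arbitrary: p q b f f' g) (simp_all add: scale_right_distrib algebra_simps)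

lemma cmp_scale_left: "cmp p q b (\<lambda>ys. sc a (f ys)) g xs = sc a (cmp p q b f g xs)"
  by (induction xs arbitrary: p q b f g) (simp_all add: scale_right_distrib scale_sum_right mult_ac)

lemma cmp_order0_left: "cmp 0 q b f g xs = 0"
  by (cases xs) simp_all

lemma cmp_order0_right: "p \<noteq> 0 \<Longrightarrow> cmp p 0 b f g xs = f (g [] # xs)"
  by (cases xs) simp_all

lemma cmp_Cons: "p \<noteq> 0 \<Longrightarrow> q \<noteq> 0 \<Longrightarrow> cmp p q b f g (x # xs) =
   (\<Sum>i\<in>{False, True}. cmp p (q - 1) (b \<noteq> i) f (\<lambda>ys. g (pr i x # ys)) xs
      + sc (psign (b \<and> i)) (cmp (p - 1) q b (\<lambda>ys. f (pr i x # ys)) g xs))"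
  by simp

declare op_comp.simps(2) [simp del]

lemma cmp_scale_right:
  "multiscalar p f \<Longrightarrow> length xs + 1 = p + q \<Longrightarrow>
    cmp p q b f (\<lambda>ys. sc a (g ys)) xs = sc a (cmp p q b f g xs)"
proof (induction xs arbitrary: p q b f g)
  case Nil
  then show ?case
    by (cases "p = 0") (auto simp: cmp_order0_right multiscalar_first)
next
  case (Cons x xs)
  consider "p = 0" | "p \<noteq> 0" "q = 0" | "p \<noteq> 0" "q \<noteq> 0"
    by blast
  then show ?case
  proof cases
    case 3
    then have "cmp (p - 1) q b (\<lambda>ys. f (v # ys)) (\<lambda>ys. sc a (g ys)) xs
        = sc a (cmp (p - 1) q b (\<lambda>ys. f (v # ys)) g xs)" for v
      using Cons.prems by (intro Cons.IH multiscalar_Cons) auto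
    with 3 Cons.prems show ?thesis
      by (simp add: cmp_Cons Cons.IH scale_right_distrib scale_sum_right mult_ac)
  qed (use Cons.prems in \<open>simp_all add: cmp_order0_left cmp_order0_right multiscalar_first\<close>)
qed

lemma cmp_zero_left:
  "(\<And>ys. length ys = p \<Longrightarrow> f ys = 0) \<Longrightarrow> length xs + 1 = p + q \<Longrightarrow> cmp p q b f g xs = 0"
proof (induction xs arbitrary: p q b f g)
  case (Cons x xs)
  then show ?case
    by (cases "p = 0 \<or> q = 0") (auto simp: cmp_order0_left cmp_order0_right cmp_Cons)
qed simp

lemma cmp_zero_right:
  "multiscalar p f \<Longrightarrow> (\<And>ys. length ys = q \<Longrightarrow> g ys = 0) \<Longrightarrow> length xs + 1 = p + q \<Longrightarrow>
    cmp p q b f g xs = 0"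
proof (induction xs arbitrary: p q b f g)
  case Nil
  then show ?case
    by (cases "p = 0") (auto simp: cmp_order0_right multiscalar_zero_first)
next
  case (Cons x xs)
  consider "p = 0" | "p \<noteq> 0" "q = 0" | "p \<noteq> 0" "q \<noteq> 0"
    by blast
  then show ?case
  proof cases
    case 3
    then have "cmp (p - 1) q b (\<lambda>ys. f (v # ys)) g xs = 0" for v
      using Cons.prems by (intro Cons.IH multiscalar_Cons) auto
    with 3 Cons.prems show ?thesis
      by (simp add: cmp_Cons Cons.IH)
  qed (use Cons.prems in \<open>simp_all add: cmp_order0_left cmp_order0_right multiscalar_zero_first\<close>)
qed

lemma cmp_Cons_homogeneous:
  assumes v: "v \<in> Gr i" and P: "P \<noteq> 0" and R: "R \<noteq> 0"
    and F: "multiscalar P F" and H: "multiscalar R H" and len: "length xs + 2 = P + R"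
  shows "cmp P R c F H (v # xs) = cmp P (R - 1) (c \<noteq> i) F (\<lambda>ys. H (v # ys)) xs
     + sc (psign (c \<and> i)) (cmp (P - 1) R c (\<lambda>ys. F (v # ys)) H xs)"
proof -
  have "cmp P (R - 1) c' F (\<lambda>ys. H (0 # ys)) xs = 0" for c'
    using F H R len by (intro cmp_zero_right) (auto simp: multiscalar_zero_first)
  moreover have "cmp (P - 1) R c (\<lambda>ys. F (0 # ys)) H xs = 0"
    using F P len by (intro cmp_zero_left) (auto simp: multiscalar_zero_first)
  ultimately show ?thesis
    using v P R by (cases i) (simp_all add: cmp_Cons proj_homogeneous)
qed

lemma cmp_Cons_decompose:
  assumes "P \<noteq> 0" "R \<noteq> 0" "multiscalar P F" "multiscalar R H" "length xs + 2 = P + R"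
  shows "cmp P R c F H (x # xs) = (\<Sum>k\<in>{False, True}. cmp P R c F H (pr k x # xs))"
  by (simp only: cmp_Cons_homogeneous[OF proj_in assms]) (simp add: cmp_Cons assms)

lemma bul_order0_left [simp]: "bul 0 r b F H = (\<lambda>_. 0)"
  by (simp add: op_bul_def fun_eq_iff)

lemma bul_add_left: "bul p q b (\<lambda>ys. f ys + f' ys) g xs = bul p q b f g xs + bul p q b f' g xs"
  by (simp add: op_bul_def cmp_add_left scale_right_distrib)

lemma bul_scale_left: "bul p q b (\<lambda>ys. sc a (f ys)) g xs = sc a (bul p q b f g xs)"
  by (simp add: op_bul_def cmp_scale_left mult.commute)

lemma bul_zero_fun_left [simp]: "bul p q b (\<lambda>_. 0) g = (\<lambda>_. 0)"
  using bul_scale_left[of p q b 0 "\<lambda>_. 0" g] by (simp add: fun_eq_iff)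

lemma bul_sum_left: "bul p q b (\<lambda>ys. \<Sum>k\<in>K. f k ys) g xs = (\<Sum>k\<in>K. bul p q b (f k) g xs)"
  by (induction K rule: infinite_finite_induct) (simp_all add: bul_add_left)

lemma bul_Cons_decompose:
  assumes "P \<noteq> 0" "R \<noteq> 0" "multiscalar P F" "multiscalar R H" "length xs + 2 = P + R"
  shows "bul P R c F H (x # xs) = (\<Sum>k\<in>{False, True}. bul P R c F H (pr k x # xs))"
proof -
  have "cmp P R c F H (x # xs) = (\<Sum>k\<in>{False, True}. cmp P R c F H (pr k x # xs))"
    by (rule cmp_Cons_decompose[OF assms])
  then show ?thesis
    using assms by (simp add: op_bul_def scale_right_distrib)
qed

lemma vanishes_first_bul:
  assumes g: "multiscalar q g" and h: "multiscalar r h" and r: "r \<noteq> 0"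
  shows "vanishes_first (q + r - 1) (bul q r c g h)"
  unfolding vanishes_first_def
proof (intro allI impI)
  fix zs :: "'g list"
  assume len: "length zs + 1 = q + r - 1"
  show "bul q r c g h (0 # zs) = 0"
  proof (cases "q = 0")
    case False
    have "cmp q (r - 1) c' g (\<lambda>ys. h (0 # ys)) zs = 0" for c'
      using g h r len by (intro cmp_zero_right) (auto simp: multiscalar_zero_first)
    moreover have "cmp (q - 1) r c (\<lambda>ys. g (0 # ys)) h zs = 0"
      using g False len by (intro cmp_zero_left) (auto simp: multiscalar_zero_first)
    ultimately show ?thesis
      using False r by (simp add: op_bul_def cmp_Cons)
  qed simp
qed

lemma bul_Cons_homogeneous:
  assumes v: "v \<in> Gr i" and R: "R \<noteq> 0" and F: "multiscalar P F" and H: "multiscalar R H"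
    and len: "length ys + 2 = P + R"
  shows "sc (of_nat (P + R - 1)) (bul P R c F H (v # ys))
    = bul P (R - 1) (c \<noteq> i) F (bul_arg R H v) ys + sc (psign (c \<and> i)) (bul (P - 1) R c (bul_arg P F v) H ys)"
proof (cases "P = 0")
  case P: False
  define T1 where "T1 = cmp P (R - 1) (c \<noteq> i) F (\<lambda>zs. H (v # zs)) ys"
  define T2 where "T2 = cmp (P - 1) R c (\<lambda>zs. F (v # zs)) H ys"
  \<comment> \<open>(P+R-1) P!R!/(P+R-1)! = P!(R-1)!/(P+R-2)! \<cdot> R = (P-1)!R!/(P+R-2)! \<cdot> P\<close>
  define \<kappa> :: 'k where "\<kappa> = of_nat (fact P * fact R) / of_nat (fact (P + R - 2))"
  have fact_P: "fact P = P * fact (P - 1)" and fact_R: "fact R = R * fact (R - 1)"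
    and "fact (P + R - 1) = (P + R - 1) * fact (P + R - 2)"
    using P R fact_reduce[where 'a = nat] by (simp_all add: numeral_2_eq_2)
  then have "sc (of_nat (P + R - 1)) (bul P R c F H (v # ys)) = sc \<kappa> (T1 + sc (psign (c \<and> i)) T2)"
    using P R unfolding \<kappa>_def T1_def T2_def op_bul_def cmp_Cons_homogeneous[OF v P R F H len]
    by (simp del: of_nat_add)
  moreover have "bul P (R - 1) (c \<noteq> i) F (bul_arg R H v) ys = sc \<kappa> T1"
  proof (cases "R = 1")
    case True
    then show ?thesis
      using P unfolding \<kappa>_def T1_def by (simp add: op_bul_def bul_arg_def cmp_order0_right fact_P)
  next
    case False
    have "cmp P (R - 1) (c \<noteq> i) F (bul_arg R H v) ys = sc (of_nat R) T1"
      unfolding T1_def bul_arg_def by (rule cmp_scale_right[OF F]) (use len R in simp)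
    then show ?thesis
      using False P R unfolding \<kappa>_def by (simp add: op_bul_def fact_R numeral_2_eq_2 mult_ac)
  qed
  moreover have "bul (P - 1) R c (bul_arg P F v) H ys = sc \<kappa> T2"
  proof (cases "P = 1")
    case True
    then show ?thesis
      unfolding T2_def by (simp add: cmp_order0_left)
  next
    case False
    have "cmp (P - 1) R c (bul_arg P F v) H ys = sc (of_nat P) T2"
      unfolding T2_def bul_arg_def by (rule cmp_scale_left)
    then show ?thesis
      using False P R unfolding \<kappa>_def by (simp add: op_bul_def fact_P numeral_2_eq_2 mult_ac)
  qed
  ultimately show ?thesis
    by (simp add: scale_right_distrib mult.commute)
qed simp

section \<open>The derivation identity in fixed orders\<close>

abbreviation derivation_lhs ::
    "nat \<Rightarrow> nat \<Rightarrow> nat \<Rightarrow> bool \<Rightarrow> bool \<Rightarrow> ('g list \<Rightarrow> 'g) \<Rightarrow> ('g list \<Rightarrow> 'g) \<Rightarrow> ('g list \<Rightarrow> 'g) \<Rightarrow> 'g list \<Rightarrow> 'g"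
  where "derivation_lhs p q r b c f g h xs \<equiv> bul (p + q) r c (br p q b f g) h xs"

abbreviation derivation_rhs ::
    "nat \<Rightarrow> nat \<Rightarrow> nat \<Rightarrow> bool \<Rightarrow> bool \<Rightarrow> ('g list \<Rightarrow> 'g) \<Rightarrow> ('g list \<Rightarrow> 'g) \<Rightarrow> ('g list \<Rightarrow> 'g) \<Rightarrow> 'g list \<Rightarrow> 'g"
  where "derivation_rhs p q r b c f g h xs \<equiv>
    br p (q + r - 1) (b \<noteq> c) f (bul q r c g h) xs + sc (psign (b \<and> c)) (br (p + r - 1) q b (bul p r c f h) g xs)"

abbreviation derivation_identity ::
    "nat \<Rightarrow> nat \<Rightarrow> nat \<Rightarrow> bool \<Rightarrow> bool \<Rightarrow> ('g list \<Rightarrow> 'g) \<Rightarrow> ('g list \<Rightarrow> 'g) \<Rightarrow> ('g list \<Rightarrow> 'g) \<Rightarrow> 'g list \<Rightarrow> bool"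
  where "derivation_identity p q r b c f g h xs \<equiv>
    derivation_lhs p q r b c f g h xs = derivation_rhs p q r b c f g h xs"

lemma derivation_identity_zero_left: "derivation_identity p q r b c (\<lambda>_. 0) g h xs"
  by simp

lemma derivation_identity_zero_middle: "derivation_identity p q r b c f (\<lambda>_. 0) h xs"
  by simp

lemma derivation_identity_order0_right:
  assumes f: "multiscalar p f" and g: "multiscalar q g" and h: "has_parity 0 c h"
  shows "derivation_identity p q 0 b c f g h xs"
  using br_Cons_homogeneous[OF has_parity_Nil[OF h] multiscalar_vanishes_first[OF f]
      multiscalar_vanishes_first[OF g]]
  by (simp add: bul_order0_right bul_arg_def conj_commute)

lemma derivation_lhs_Cons_homogeneous:
  assumes v: "v \<in> Gr k" and r: "r \<noteq> 0"
    and f: "multiscalar p f" and g: "multiscalar q g" and h: "multiscalar r h"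
    and len: "length ys + 2 = p + q + r"
  shows "sc (of_nat (p + q + r - 1)) (derivation_lhs p q r b c f g h (v # ys))
    = derivation_lhs p q (r - 1) b (c \<noteq> k) f g (bul_arg r h v) ys
      + sc (psign (c \<and> k)) (derivation_lhs p (q - 1) r (b \<noteq> k) c f (bul_arg q g v) h ys
        + sc (psign (k \<and> b)) (derivation_lhs (p - 1) q r b c (bul_arg p f v) g h ys))"
proof -
  have "bul_arg (p + q) (br p q b f g) v
      = (\<lambda>zs. br p (q - 1) (b \<noteq> k) f (bul_arg q g v) zs
          + sc (psign (k \<and> b)) (br (p - 1) q b (bul_arg p f v) g zs))"
    using br_Cons_homogeneous[OF v multiscalar_vanishes_first[OF f] multiscalar_vanishes_first[OF g]]
    by (simp add: bul_arg_def fun_eq_iff)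
  moreover have "derivation_lhs p (q - 1) r (b \<noteq> k) c f (bul_arg q g v) h ys
      = bul (p + q - 1) r c (br p (q - 1) (b \<noteq> k) f (bul_arg q g v)) h ys"
    by (cases "q = 0") simp_all
  moreover have "derivation_lhs (p - 1) q r b c (bul_arg p f v) g h ys
      = bul (p + q - 1) r c (br (p - 1) q b (bul_arg p f v) g) h ys"
    by (cases "p = 0") simp_all
  ultimately show ?thesis
    using bul_Cons_homogeneous[OF v r multiscalar_br[OF f g] h] len
    by (simp add: bul_add_left bul_scale_left)
qed

lemma br_bul_right_Cons_homogeneous:
  assumes v: "v \<in> Gr k" and r: "r \<noteq> 0"
    and f: "multiscalar p f" and g: "multiscalar q g" and h: "multiscalar r h"
    and len: "length ys + 2 = p + q + r"
  shows "sc (of_nat (p + q + r - 1)) (br p (q + r - 1) b f (bul q r c g h) (v # ys))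
    = br p (q + r - 2) (b \<noteq> k) f (bul q (r - 1) (c \<noteq> k) g (bul_arg r h v)) ys
      + sc (psign (c \<and> k)) (br p (q + r - 2) (b \<noteq> k) f (bul (q - 1) r c (bul_arg q g v) h) ys)
      + sc (psign (k \<and> b)) (br (p - 1) (q + r - 1) b (bul_arg p f v) (bul q r c g h) ys)"
proof -
  have N: "p + (q + r - 1) = p + q + r - 1"
    using r by simp
  have "br p (q + r - 2) (b \<noteq> k) f (bul_arg (q + r - 1) (bul q r c g h) v) ys
      = br p (q + r - 2) (b \<noteq> k) f
          (\<lambda>zs. bul q (r - 1) (c \<noteq> k) g (bul_arg r h v) zs
            + sc (psign (c \<and> k)) (bul (q - 1) r c (bul_arg q g v) h zs)) ys"
    using r bul_Cons_homogeneous[OF v r g h]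
    by (intro br_cong; cases "q = 0 \<and> r = 1") (auto simp: bul_arg_def)
  then show ?thesis
    using br_Cons_homogeneous[where b = b and xs = ys,
        OF v multiscalar_vanishes_first[OF f] vanishes_first_bul[OF g h r], unfolded N]
    by (simp add: br_add_right br_scale_right numeral_2_eq_2)
qed

lemma br_bul_left_Cons_homogeneous:
  assumes v: "v \<in> Gr k" and r: "r \<noteq> 0"
    and f: "multiscalar p f" and g: "multiscalar q g" and h: "multiscalar r h"
    and len: "length ys + 2 = p + q + r"
  shows "sc (of_nat (p + q + r - 1)) (br (p + r - 1) q b (bul p r c f h) g (v # ys))
    = br (p + r - 1) (q - 1) (b \<noteq> k) (bul p r c f h) (bul_arg q g v) ys
      + sc (psign (k \<and> b)) (br (p + r - 2) q b (bul p (r - 1) (c \<noteq> k) f (bul_arg r h v)) g ys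
        + sc (psign (c \<and> k)) (br (p + r - 2) q b (bul (p - 1) r c (bul_arg p f v) h) g ys))"
proof -
  have N: "p + r - 1 + q = p + q + r - 1"
    using r by simp
  have "br (p + r - 2) q b (bul_arg (p + r - 1) (bul p r c f h) v) g ys
      = br (p + r - 2) q b
          (\<lambda>zs. bul p (r - 1) (c \<noteq> k) f (bul_arg r h v) zs
            + sc (psign (c \<and> k)) (bul (p - 1) r c (bul_arg p f v) h zs)) g ys"
    using r bul_Cons_homogeneous[OF v r f h]
    by (intro br_cong; cases "p = 0 \<and> r = 1") (auto simp: bul_arg_def)
  then show ?thesis
    using br_Cons_homogeneous[where b = b and xs = ys,
        OF v vanishes_first_bul[OF f h r] multiscalar_vanishes_first[OF g], unfolded N]
    by (simp add: br_add_left br_scale_left numeral_2_eq_2 add.commute)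
qed

lemma psign_reorder:
  "x1 + sc (psign (b \<and> (c \<noteq> k))) x2
     + sc (psign (c \<and> k)) (x3 + sc (psign ((b \<noteq> k) \<and> c)) x4 + sc (psign (k \<and> b)) (x5 + sc (psign (b \<and> c)) x6))
   = x1 + sc (psign (c \<and> k)) x3 + sc (psign (k \<and> (b \<noteq> c))) x5
     + sc (psign (b \<and> c)) (x4 + sc (psign (k \<and> b)) (x2 + sc (psign (c \<and> k)) x6))"
  by (cases b; cases c; cases k) (simp_all add: psign_def scale_right_distrib algebra_simps)

lemma derivation_rhs_Cons_homogeneous:
  assumes v: "v \<in> Gr k" and r: "r \<noteq> 0"
    and f: "multiscalar p f" and g: "multiscalar q g" and h: "multiscalar r h"
    and len: "length ys + 2 = p + q + r"
  shows "sc (of_nat (p + q + r - 1)) (derivation_rhs p q r b c f g h (v # ys))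
    = derivation_rhs p q (r - 1) b (c \<noteq> k) f g (bul_arg r h v) ys
      + sc (psign (c \<and> k)) (derivation_rhs p (q - 1) r (b \<noteq> k) c f (bul_arg q g v) h ys
        + sc (psign (k \<and> b)) (derivation_rhs (p - 1) q r b c (bul_arg p f v) g h ys))"
proof -
  have xor: "((b \<noteq> c) \<noteq> k) = (b \<noteq> (c \<noteq> k))" "((b \<noteq> k) \<noteq> c) = (b \<noteq> (c \<noteq> k))"
    by auto
  have idx: "q + (r - 1) - 1 = q + r - 2" "p + (r - 1) - 1 = p + r - 2"
    using r by linarith+
  have rhs2: "derivation_rhs p (q - 1) r (b \<noteq> k) c f (bul_arg q g v) h ys
      = br p (q + r - 2) (b \<noteq> (c \<noteq> k)) f (bul (q - 1) r c (bul_arg q g v) h) ys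
        + sc (psign ((b \<noteq> k) \<and> c)) (br (p + r - 1) (q - 1) (b \<noteq> k) (bul p r c f h) (bul_arg q g v) ys)"
    unfolding xor(2) by (cases "q = 0") (simp_all add: numeral_2_eq_2)
  have rhs3: "derivation_rhs (p - 1) q r b c (bul_arg p f v) g h ys
      = br (p - 1) (q + r - 1) (b \<noteq> c) (bul_arg p f v) (bul q r c g h) ys
        + sc (psign (b \<and> c)) (br (p + r - 2) q b (bul (p - 1) r c (bul_arg p f v) h) g ys)"
    by (cases "p = 0") (simp_all add: numeral_2_eq_2)
  have "sc (of_nat (p + q + r - 1)) (derivation_rhs p q r b c f g h (v # ys))
      = sc (of_nat (p + q + r - 1)) (br p (q + r - 1) (b \<noteq> c) f (bul q r c g h) (v # ys))
        + sc (psign (b \<and> c)) (sc (of_nat (p + q + r - 1)) (br (p + r - 1) q b (bul p r c f h) g (v # ys)))"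
    unfolding scale_right_distrib scale_left_commute[of "of_nat (p + q + r - 1)"] ..
  also have "\<dots> = derivation_rhs p q (r - 1) b (c \<noteq> k) f g (bul_arg r h v) ys
      + sc (psign (c \<and> k)) (derivation_rhs p (q - 1) r (b \<noteq> k) c f (bul_arg q g v) h ys
        + sc (psign (k \<and> b)) (derivation_rhs (p - 1) q r b c (bul_arg p f v) g h ys))"
    unfolding br_bul_right_Cons_homogeneous[OF v r f g h len] br_bul_left_Cons_homogeneous[OF v r f g h len]
      idx rhs2 rhs3 xor(1)
    by (rule psign_reorder[symmetric])
  finally show ?thesis .
qed

lemma derivation_identity_Cons_homogeneous:
  assumes IH: "\<And>p q r f g h b c. multiscalar p f \<Longrightarrow> multiscalar q g \<Longrightarrow> multiscalar r h \<Longrightarrow>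
      has_parity r c h \<Longrightarrow> length ys + 1 = p + q + r \<Longrightarrow> derivation_identity p q r b c f g h ys"
    and v: "v \<in> Gr k" and r: "r \<noteq> 0" and pq: "p + q \<noteq> 0"
    and f: "multiscalar p f" and g: "multiscalar q g" and h: "multiscalar r h" and hc: "has_parity r c h"
    and len: "length ys + 2 = p + q + r"
  shows "derivation_identity p q r b c f g h (v # ys)"
proof -
  have "derivation_identity p q (r - 1) b (c \<noteq> k) f g (bul_arg r h v) ys"
    using len r by (intro IH f g multiscalar_bul_arg[OF h] has_parity_bul_arg[OF hc v r]) simp
  moreover have "derivation_identity p (q - 1) r (b \<noteq> k) c f (bul_arg q g v) h ys"
  proof (cases "q = 0")
    case False
    then show ?thesis
      using len by (intro IH f multiscalar_bul_arg[OF g] h hc) simp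
  qed (simp only: bul_arg_order0 derivation_identity_zero_middle)
  moreover have "derivation_identity (p - 1) q r b c (bul_arg p f v) g h ys"
  proof (cases "p = 0")
    case False
    then show ?thesis
      using len by (intro IH multiscalar_bul_arg[OF f] g h hc) simp
  qed (simp only: bul_arg_order0 derivation_identity_zero_left)
  ultimately have "sc (of_nat (p + q + r - 1)) (derivation_lhs p q r b c f g h (v # ys))
      = sc (of_nat (p + q + r - 1)) (derivation_rhs p q r b c f g h (v # ys))"
    by (simp only: derivation_lhs_Cons_homogeneous[OF v r f g h len]
        derivation_rhs_Cons_homogeneous[OF v r f g h len])
  moreover have "p + q + r - 1 \<noteq> 0"
    using r pq by arith
  ultimately show ?thesis
    by (simp del: of_nat_add of_nat_diff)
qed

lemma derivation_identity:
  assumes "multiscalar p f" "multiscalar q g" "multiscalar r h" "has_parity r c h"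
    and "length xs + 1 = p + q + r"
  shows "derivation_identity p q r b c f g h xs"
  using assms
proof (induction xs arbitrary: p q r f g h b c)
  case Nil
  then have "p + q = 0 \<or> r = 0"
    by simp arith
  then consider "p = 0" "q = 0" | "r = 0"
    by auto
  then show ?case
    by cases (use Nil.prems derivation_identity_order0_right in auto)
next
  case (Cons x ys)
  note f = Cons.prems(1) and g = Cons.prems(2) and h = Cons.prems(3) and hc = Cons.prems(4)
  consider "p = 0" "q = 0" | "r = 0" | "p + q \<noteq> 0" "r \<noteq> 0"
    by auto
  then show ?case
  proof cases
    case 3
    have len: "length ys + 2 = p + q + r"
      using Cons.prems(5) by simp
    have "derivation_identity p q r b c f g h (pr k x # ys)" for k
      using 3 f g h hc len by (intro derivation_identity_Cons_homogeneous[OF Cons.IH proj_in]) simp_all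
    moreover have "bul (p + q) r c (br p q b f g) h (x # ys)
        = (\<Sum>k\<in>{False, True}. bul (p + q) r c (br p q b f g) h (pr k x # ys))"
      using 3 len by (intro bul_Cons_decompose multiscalar_br f g h) simp_all
    moreover have "br p (q + r - 1) (b \<noteq> c) f (bul q r c g h) (x # ys)
        = (\<Sum>k\<in>{False, True}. br p (q + r - 1) (b \<noteq> c) f (bul q r c g h) (pr k x # ys))"
      by (rule br_Cons_decompose[OF multiscalar_vanishes_first[OF f] vanishes_first_bul[OF g h 3(2)]])
    moreover have "br (p + r - 1) q b (bul p r c f h) g (x # ys)
        = (\<Sum>k\<in>{False, True}. br (p + r - 1) q b (bul p r c f h) g (pr k x # ys))"
      by (rule br_Cons_decompose[OF vanishes_first_bul[OF f h 3(2)] multiscalar_vanishes_first[OF g]])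
    ultimately show ?thesis
      by (simp only: sum.distrib scale_sum_right)
  qed (use Cons.prems derivation_identity_order0_right in auto)
qed

end

section \<open>Summation over orders\<close>

lemma sum_triangle_swap:
  fixes N :: nat
  shows "(\<Sum>(i, j)\<in>{(i, j). i + j \<le> N}. g i j) = (\<Sum>(i, j)\<in>{(i, j). i + j \<le> N}. g j i)"
  by (rule sum.reindex_bij_witness[where i = prod.swap and j = prod.swap]) (auto simp: add.commute)

lemma sum_triangle_drop_zero:
  fixes g :: "nat \<Rightarrow> nat \<Rightarrow> 'a::comm_monoid_add"
  assumes "\<And>i. g i 0 = 0"
  shows "(\<Sum>(i, j)\<in>{(i, j). i + j \<le> Suc n}. g i j) = (\<Sum>i\<le>n. \<Sum>j\<in>{1..Suc n - i}. g i j)"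
proof -
  have "{(i, j). i + j \<le> Suc n} = Sigma {..Suc n} (\<lambda>i. {..Suc n - i})"
    by auto
  then have "(\<Sum>(i, j)\<in>{(i, j). i + j \<le> Suc n}. g i j) = (\<Sum>i\<le>Suc n. \<Sum>j\<le>Suc n - i. g i j)"
    by (simp add: sum.Sigma[symmetric])
  also have "\<dots> = (\<Sum>i\<le>n. \<Sum>j\<le>Suc n - i. g i j)"
    using assms by simp
  also have "\<dots> = (\<Sum>i\<le>n. \<Sum>j\<in>{1..Suc n - i}. g i j)"
    using assms by (simp add: atMost_atLeast0 sum.atLeast_Suc_atMost)
  finally show ?thesis .
qed

context graded_bilinear
begin

lemma U_hom_multiscalar:
  assumes "U_hom sc G0 G1 a X"
  shows "multiscalar p (X p)"
  unfolding multiscalar_def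
proof (intro allI impI)
  fix ys zs :: "'g list" and a' u
  assume len: "length ys + length zs + 1 = p"
  have "\<forall>n xs k c u. length xs = n \<longrightarrow> k < n \<longrightarrow> X n (xs[k := sc c u]) = sc c (X n (xs[k := u]))"
    using assms unfolding U_hom_def U_elem_def by blast
  from this[rule_format, of "ys @ u # zs" p "length ys" a' u]
  have "X p ((ys @ u # zs)[length ys := sc a' u]) = sc a' (X p ((ys @ u # zs)[length ys := u]))"
    using len by simp
  then show "X p (ys @ sc a' u # zs) = sc a' (X p (ys @ u # zs))"
    by simp
qed

lemma U_hom_has_parity: "U_hom sc G0 G1 a X \<Longrightarrow> has_parity p a (X p)"
  unfolding U_hom_def has_parity_def by blast

lemma U_bul_U_br_triangle:
  "U_bul sc G0 G1 c (U_br sc G0 G1 lb b A B) C n xs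
    = (\<Sum>(i, j)\<in>{(i, j). i + j \<le> Suc n}.
        bul (i + j) (Suc n - i - j) c (br i j b (A i) (B j)) (C (Suc n - i - j)) xs)"
proof -
  have "bul s (Suc n - s) c (U_br sc G0 G1 lb b A B s) (C (Suc n - s)) xs
      = (\<Sum>i\<le>s. bul (i + (s - i)) (Suc n - i - (s - i)) c (br i (s - i) b (A i) (B (s - i)))
          (C (Suc n - i - (s - i))) xs)" for s
    unfolding U_br_def atMost_atLeast0 bul_sum_left by (intro sum.cong) auto
  then have "U_bul sc G0 G1 c (U_br sc G0 G1 lb b A B) C n xs
      = (\<Sum>s\<le>Suc n. \<Sum>i\<le>s. bul (i + (s - i)) (Suc n - i - (s - i)) c (br i (s - i) b (A i) (B (s - i)))
          (C (Suc n - i - (s - i))) xs)"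
    by (simp add: U_bul_def atMost_atLeast0 sum.atLeast_Suc_atMost)
  then show ?thesis
    by (simp only: sum.triangle_reindex_eq)
qed

lemma U_br_U_bul_right_triangle:
  "U_br sc G0 G1 lb b' A (U_bul sc G0 G1 c B C) n xs
    = (\<Sum>(i, j)\<in>{(i, j). i + j \<le> Suc n}.
        br i (n - i) b' (A i) (bul j (Suc n - i - j) c (B j) (C (Suc n - i - j))) xs)"
proof -
  have "br i (n - i) b' (A i) (U_bul sc G0 G1 c B C (n - i)) xs
      = (\<Sum>j\<in>{1..Suc n - i}. br i (n - i) b' (A i) (bul j (Suc n - i - j) c (B j) (C (Suc n - i - j))) xs)"
    if "i \<le> n" for i
    unfolding U_bul_def br_sum_right using that by (intro sum.cong) (auto simp: Suc_diff_le)
  then show ?thesis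
    by (simp add: U_br_def sum_triangle_drop_zero atMost_atLeast0)
qed

lemma U_br_U_bul_left_triangle:
  "U_br sc G0 G1 lb b (U_bul sc G0 G1 c A C) B n xs
    = (\<Sum>(i, j)\<in>{(i, j). i + j \<le> Suc n}.
        br (n - j) j b (bul i (Suc n - i - j) c (A i) (C (Suc n - i - j))) (B j) xs)"
proof -
  have "br (n - j) j b (U_bul sc G0 G1 c A C (n - j)) (B j) xs
      = (\<Sum>i\<in>{1..Suc n - j}. br (n - j) j b (bul i (Suc n - i - j) c (A i) (C (Suc n - i - j))) (B j) xs)"
    if "j \<le> n" for j
    unfolding U_bul_def br_sum_left using that by (intro sum.cong) (auto simp: Suc_diff_le add.commute)
  moreover have "U_br sc G0 G1 lb b (U_bul sc G0 G1 c A C) B n xs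
      = (\<Sum>j\<le>n. br (n - j) j b (U_bul sc G0 G1 c A C (n - j)) (B j) xs)"
    unfolding U_br_def atMost_atLeast0 by (subst sum.atLeastAtMost_rev) (intro sum.cong; simp)
  ultimately show ?thesis
    by (subst sum_triangle_swap) (simp add: sum_triangle_drop_zero)
qed

lemma U_derivation_identity:
  assumes A: "\<And>p. multiscalar p (A p)" and B: "\<And>p. multiscalar p (B p)"
    and C: "\<And>p. multiscalar p (C p)" and C_parity: "\<And>p. has_parity p c (C p)"
    and len: "length xs = n"
  shows "U_bul sc G0 G1 c (U_br sc G0 G1 lb b A B) C n xs
    = U_br sc G0 G1 lb (b \<noteq> c) A (U_bul sc G0 G1 c B C) n xs
      + sc (psign (b \<and> c)) (U_br sc G0 G1 lb b (U_bul sc G0 G1 c A C) B n xs)"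
proof -
  have "bul (i + j) (Suc n - i - j) c (br i j b (A i) (B j)) (C (Suc n - i - j)) xs
      = br i (n - i) (b \<noteq> c) (A i) (bul j (Suc n - i - j) c (B j) (C (Suc n - i - j))) xs
        + sc (psign (b \<and> c)) (br (n - j) j b (bul i (Suc n - i - j) c (A i) (C (Suc n - i - j))) (B j) xs)"
    if "i + j \<le> Suc n" for i j
  proof -
    have "j + (Suc n - i - j) - 1 = n - i" "i + (Suc n - i - j) - 1 = n - j"
      and "length xs + 1 = i + j + (Suc n - i - j)"
      using that len by auto
    with derivation_identity[OF A B C C_parity this(3), of b] show ?thesis
      by simp
  qed
  then show ?thesis
    unfolding U_bul_U_br_triangle U_br_U_bul_right_triangle U_br_U_bul_left_triangle
      scale_sum_right sum.distrib[symmetric]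
    by (intro sum.cong refl) auto
qed

end

theorem proposition4p3:
  fixes sc :: "'k::field_char_0 \<Rightarrow> 'g::ab_group_add \<Rightarrow> 'g"
    and G0 G1 :: "'g set"
    and lb :: "'g \<Rightarrow> 'g \<Rightarrow> 'g"
    and A B C :: "nat \<Rightarrow> 'g list \<Rightarrow> 'g"
    and a b c :: bool
  assumes "lie_superalgebra sc G0 G1 lb"
    and "U_hom sc G0 G1 a A"
    and "U_hom sc G0 G1 b B"
    and "U_hom sc G0 G1 c C"
  shows "U_eq
           (U_bul sc G0 G1 c (U_br sc G0 G1 lb b A B) C)
           (\<lambda>n xs. U_br sc G0 G1 lb (b \<noteq> c) A (U_bul sc G0 G1 c B C) n xs
                 + sc (psign (b \<and> c)) (U_br sc G0 G1 lb b (U_bul sc G0 G1 c A C) B n xs))"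
proof -
  interpret graded_bilinear sc G0 G1 lb
    by (rule lie_superalgebra_graded_bilinear[OF assms(1)])
  show ?thesis
    unfolding U_eq_def
    using U_derivation_identity[OF U_hom_multiscalar[OF assms(2)] U_hom_multiscalar[OF assms(3)]
        U_hom_multiscalar[OF assms(4)] U_hom_has_parity[OF assms(4)]]
    by blast
qed

end
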